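(* Let $T$ be a real-analytic diffeomorphism of $\mathbb{T}^2$ homotopic to the identity such that the lifts of $T$ and $T^{-1}$ extend to entire maps of $\mathbb{C}^2$, and set $G(\alpha)=T^{-1}\circ R_\alpha\circ T$. Let $p,q$ be coprime integers with $q\ge1$, $p/q\in[0,1]$, let $c\ge0$ and $\Phi(x,y)=\left(x+\frac{1}{2q},\ y+c\sin(2\pi qx)\right)$, and $G'(\alpha)=(\Phi\circ T)^{-1}\circ R_\alpha\circ(\Phi\circ T)$. Then for every $r\ge0$, $\varepsilon>0$ and $\tau\in\mathbb{N}$ there exists an interval $I$ of positive length centered at $p/q$ such that for all $\alpha\in I$, $$\max_{i=0,\dots,\tau}\left|G(\alpha)^i-G'(\alpha)^i\right|_r<\varepsilon .$$
   Context: $R_\alpha(x,y)=(x+\alpha,y)$; $F^i$ denotes the $i$-th iterate. For $r\ge0$, $A^r=\{(x,y)\in\mathbb{C}^2:|\mathrm{Im}\,x|\le r,|\mathrm{Im}\,y|\le r\}$ and for maps $F,G$ of $\mathbb{C}^2$ whose difference is $\mathbb{Z}^2$-periodic, $|F-G|_r=\max_{i=1,2}\sup_{A^r}|F_i-G_i|$. *)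

theory Defs
  imports "HOL-Analysis.Analysis"
begin

type_synonym c2 = "complex \<times> complex"

definition entire2 :: "(c2 \<Rightarrow> c2) \<Rightarrow> bool" where
  "entire2 F \<longleftrightarrow> (\<forall>z. \<exists>L. (F has_derivative L) (at z) \<and>
      (\<forall>c u v. L (c * u, c * v) = (c * fst (L (u, v)), c * snd (L (u, v)))))"

definition real_pt :: "c2 \<Rightarrow> bool" where
  "real_pt z \<longleftrightarrow> Im (fst z) = 0 \<and> Im (snd z) = 0"

text \<open>Lift of a torus map homotopic to the identity: F(z + k) = F(z) + k for k in Z^2.\<close>
definition lift_id_periodic :: "(c2 \<Rightarrow> c2) \<Rightarrow> bool" where
  "lift_id_periodic F \<longleftrightarrow> (\<forall>z (m::int) (n::int).
      F (fst z + of_int m, snd z + of_int n) = (fst (F z) + of_int m, snd (F z) + of_int n))"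

definition Rot :: "real \<Rightarrow> c2 \<Rightarrow> c2" where
  "Rot \<alpha> z = (fst z + complex_of_real \<alpha>, snd z)"

definition strip :: "real \<Rightarrow> c2 set" where
  "strip r = {z. \<bar>Im (fst z)\<bar> \<le> r \<and> \<bar>Im (snd z)\<bar> \<le> r}"

text \<open>|F - G|_r (as an extended real, so it is always defined).\<close>
definition dist_r :: "real \<Rightarrow> (c2 \<Rightarrow> c2) \<Rightarrow> (c2 \<Rightarrow> c2) \<Rightarrow> ereal" where
  "dist_r r F G = max (SUP z\<in>strip r. ereal (cmod (fst (F z) - fst (G z))))
                      (SUP z\<in>strip r. ereal (cmod (snd (F z) - snd (G z))))"

definition Phi :: "int \<Rightarrow> real \<Rightarrow> c2 \<Rightarrow> c2" where
  "Phi q c z = (fst z + complex_of_real (1 / (2 * of_int q)),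
                snd z + complex_of_real c * sin (2 * complex_of_real pi * of_int q * fst z))"

end

theory Submission
  imports Defs
begin

text \<open>
  Since \<open>sin (2\<pi>q(x + p/q)) = sin (2\<pi>qx)\<close>, the map \<open>\<Phi>\<close> commutes with \<open>R\<^sub>p\<^sub>/\<^sub>q\<close>.
  For general \<open>\<alpha>\<close> the conjugate \<open>\<Phi>\<^sup>-\<^sup>1 R\<^sub>\<alpha> \<Phi>\<close> differs from \<open>R\<^sub>\<alpha>\<close> only by
  \<open>c (sin (2\<pi>qx) - sin (2\<pi>q(x + \<alpha>)))\<close> in the second coordinate, which tends to 0 uniformly
  on every strip \<open>A\<^sup>r\<close> as \<open>\<alpha> \<rightarrow> p/q\<close>.
  A continuous lift \<open>F\<close> of a map homotopic to the identity has \<open>\<int>\<^sup>2\<close>-periodic displacement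
  \<open>F - id\<close>, so by compactness of a fundamental domain it maps strips into strips and is
  uniformly continuous on each strip. Hence \<open>G(\<alpha>)\<close> and \<open>G'(\<alpha>)\<close> are uniformly close on strips,
  and the same holds for their first \<open>\<tau>\<close> iterates by induction.
\<close>

lemma strip_near:
  assumes "x \<in> strip a" and "dist x y \<le> b"
  shows "y \<in> strip (a + b)"
proof -
  have "\<bar>Im (fst x) - Im (fst y)\<bar> \<le> b" "\<bar>Im (snd x) - Im (snd y)\<bar> \<le> b"
    using assms(2) dist_fst_le[of x y] dist_snd_le[of x y]
      abs_Im_le_cmod[of "fst x - fst y"] abs_Im_le_cmod[of "snd x - snd y"]
    by (auto simp: dist_norm)
  then show ?thesis
    using assms(1) by (auto simp: strip_def)
qed

lemma Rot_in_strip_iff [simp]: "Rot \<alpha> z \<in> strip s \<longleftrightarrow> z \<in> strip s"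
  by (simp add: Rot_def strip_def)

lemma dist_Rot_Rot [simp]: "dist (Rot \<alpha> x) (Rot \<alpha> y) = dist x y"
proof -
  have "Rot \<alpha> x - Rot \<alpha> y = x - y"
    by (simp add: Rot_def prod_eq_iff)
  then show ?thesis
    by (simp add: dist_norm)
qed

lemma dist_r_le:
  assumes "\<And>z. z \<in> strip r \<Longrightarrow> dist (f z) (g z) \<le> e"
  shows "dist_r r f g \<le> ereal e"
proof -
  have "cmod (fst (f z) - fst (g z)) \<le> e" "cmod (snd (f z) - snd (g z)) \<le> e"
    if "z \<in> strip r" for z
    using assms[OF that] dist_fst_le[of "f z" "g z"] dist_snd_le[of "f z" "g z"]
    by (auto simp: dist_norm)
  then show ?thesis
    unfolding dist_r_def by (auto intro!: max.boundedI SUP_least)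
qed

lemma entire2_continuous: "entire2 F \<Longrightarrow> continuous_on UNIV F"
  unfolding entire2_def
  by (metis continuous_at_imp_continuous_on has_derivative_continuous)

definition lattice_periodic :: "(c2 \<Rightarrow> 'a) \<Rightarrow> bool" where
  "lattice_periodic h \<longleftrightarrow> (\<forall>z (m::int) (n::int). h (fst z + of_int m, snd z + of_int n) = h z)"

definition strip_cell :: "real \<Rightarrow> c2 set" where
  "strip_cell s = {z \<in> strip s. Re (fst z) \<in> {-1..2} \<and> Re (snd z) \<in> {-1..2}}"

lemma compact_strip_cell: "compact (strip_cell s)"
proof -
  have "strip_cell s = cbox (Complex (-1) (-s), Complex (-1) (-s)) (Complex 2 s, Complex 2 s)"
    by (auto simp: strip_cell_def strip_def cbox_Pair_eq in_cbox_complex_iff abs_le_iff)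
  then show ?thesis
    by simp
qed

lemma lattice_periodic_reduce:
  assumes "lattice_periodic h" and "x \<in> strip s" and "dist x y \<le> 1"
  obtains x' y' where "x' \<in> strip_cell (s + 1)" "y' \<in> strip_cell (s + 1)"
    "dist x' y' = dist x y" "h x' = h x" "h y' = h y"
proof -
  define k :: c2 where "k = (of_int \<lfloor>Re (fst x)\<rfloor>, of_int \<lfloor>Re (snd x)\<rfloor>)"
  have shift: "h (z - k) = h z" for z
    using assms(1) unfolding lattice_periodic_def k_def
    by (metis (no_types, lifting) diff_add_cancel fst_diff snd_diff fst_conv snd_conv prod.collapse)
  have "\<bar>Re (fst x) - Re (fst y)\<bar> \<le> 1" "\<bar>Re (snd x) - Re (snd y)\<bar> \<le> 1"
    using assms(3) dist_fst_le[of x y] dist_snd_le[of x y]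
      abs_Re_le_cmod[of "fst x - fst y"] abs_Re_le_cmod[of "snd x - snd y"]
    by (auto simp: dist_norm)
  moreover have "x - k \<in> strip (s + 1)" "y - k \<in> strip (s + 1)"
    using assms(2) strip_near[OF assms(2,3)] by (auto simp: strip_def k_def)
  ultimately have "x - k \<in> strip_cell (s + 1)" "y - k \<in> strip_cell (s + 1)"
    unfolding strip_cell_def k_def
    by (auto simp: abs_le_iff intro: of_int_floor_le, linarith+)
  moreover have "dist (x - k) (y - k) = dist x y"
    by (simp add: dist_norm)
  ultimately show thesis
    using that shift by blast
qed

lemma lattice_periodic_bounded_on_strip:
  fixes h :: "c2 \<Rightarrow> 'a::metric_space"
  assumes "continuous_on UNIV h" and "lattice_periodic h"
  shows "bounded (h ` strip s)"
proof (rule bounded_subset)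
  show "bounded (h ` strip_cell (s + 1))"
    using assms(1) compact_strip_cell
    by (intro compact_imp_bounded compact_continuous_image) (auto intro: continuous_on_subset)
  show "h ` strip s \<subseteq> h ` strip_cell (s + 1)"
  proof
    fix w assume "w \<in> h ` strip s"
    then obtain x where "x \<in> strip s" "w = h x"
      by blast
    then show "w \<in> h ` strip_cell (s + 1)"
      using lattice_periodic_reduce[OF assms(2), of x s x] by (metis dist_self image_eqI zero_le_one)
  qed
qed

lemma lattice_periodic_uniformly_continuous_on_strip:
  fixes h :: "c2 \<Rightarrow> 'a::metric_space"
  assumes "continuous_on UNIV h" and "lattice_periodic h"
  shows "uniformly_continuous_on (strip s) h"
  unfolding uniformly_continuous_on_def
proof (intro allI impI)
  fix e :: real assume "e > 0"
  have "uniformly_continuous_on (strip_cell (s + 1)) h"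
    using assms(1) compact_strip_cell
    by (intro compact_uniformly_continuous) (auto intro: continuous_on_subset)
  then obtain d where d: "d > 0"
    "\<forall>x\<in>strip_cell (s + 1). \<forall>y\<in>strip_cell (s + 1). dist y x < d \<longrightarrow> dist (h y) (h x) < e"
    using \<open>e > 0\<close> unfolding uniformly_continuous_on_def by metis
  show "\<exists>d>0. \<forall>x\<in>strip s. \<forall>y\<in>strip s. dist y x < d \<longrightarrow> dist (h y) (h x) < e"
  proof (intro exI[of _ "min d 1"] conjI ballI impI)
    fix x y assume "x \<in> strip s" "y \<in> strip s" "dist y x < min d 1"
    then have "dist x y \<le> 1"
      by (simp add: dist_commute)
    then obtain x' y' where "x' \<in> strip_cell (s + 1)" "y' \<in> strip_cell (s + 1)"
      "dist x' y' = dist x y" "h x' = h x" "h y' = h y"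
      using lattice_periodic_reduce[OF assms(2) \<open>x \<in> strip s\<close>] by blast
    then show "dist (h y) (h x) < e"
      using d \<open>dist y x < min d 1\<close> by (metis dist_commute min_less_iff_conj)
  qed (use d in auto)
qed

lemma lift_id_periodic_displacement:
  "lift_id_periodic g \<Longrightarrow> lattice_periodic (\<lambda>z. g z - z)"
  by (simp add: lift_id_periodic_def lattice_periodic_def prod_eq_iff)

lemma lift_maps_strip:
  assumes "continuous_on UNIV g" and "lift_id_periodic g"
  shows "\<exists>t. g ` strip s \<subseteq> strip t"
proof -
  have "bounded ((\<lambda>z. g z - z) ` strip s)"
    using assms by (intro lattice_periodic_bounded_on_strip lift_id_periodic_displacement continuous_intros)
  then obtain M where "\<forall>z\<in>strip s. norm (g z - z) \<le> M"
    unfolding bounded_iff by blast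
  then have "g z \<in> strip (s + M)" if "z \<in> strip s" for z
    using strip_near[OF that, of "g z" M] that by (simp add: dist_norm norm_minus_commute)
  then show ?thesis
    by blast
qed

lemma lift_uniformly_continuous_on_strip:
  assumes "continuous_on UNIV g" and "lift_id_periodic g"
  shows "uniformly_continuous_on (strip s) g"
proof -
  have "uniformly_continuous_on (strip s) (\<lambda>z. (g z - z) + z)"
    using assms
    by (intro uniformly_continuous_on_add uniformly_continuous_on_id
        lattice_periodic_uniformly_continuous_on_strip lift_id_periodic_displacement continuous_intros)
  then show ?thesis
    by simp
qed

definition close_on_strips :: "'a filter \<Rightarrow> ('a \<Rightarrow> c2 \<Rightarrow> c2) \<Rightarrow> ('a \<Rightarrow> c2 \<Rightarrow> c2) \<Rightarrow> bool" where
  "close_on_strips F f g \<longleftrightarrow>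
     (\<forall>s e. e > 0 \<longrightarrow> (\<forall>\<^sub>F \<alpha> in F. \<forall>z\<in>strip s. dist (f \<alpha> z) (g \<alpha> z) < e))"

definition maps_strips :: "('a \<Rightarrow> c2 \<Rightarrow> c2) \<Rightarrow> bool" where
  "maps_strips f \<longleftrightarrow> (\<forall>s. \<exists>t. \<forall>\<alpha>. f \<alpha> ` strip s \<subseteq> strip t)"

definition equicontinuous_on_strips :: "('a \<Rightarrow> c2 \<Rightarrow> c2) \<Rightarrow> bool" where
  "equicontinuous_on_strips f \<longleftrightarrow> (\<forall>s e. e > 0 \<longrightarrow>
     (\<exists>d>0. \<forall>\<alpha>. \<forall>x\<in>strip s. \<forall>y\<in>strip s. dist x y < d \<longrightarrow> dist (f \<alpha> x) (f \<alpha> y) < e))"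

lemma maps_strips_Rot: "maps_strips Rot"
  by (auto simp: maps_strips_def)

lemma equicontinuous_on_strips_Rot: "equicontinuous_on_strips Rot"
  by (auto simp: equicontinuous_on_strips_def)

lemma maps_strips_comp:
  assumes "maps_strips k"
    and "\<And>s. \<exists>t. h ` strip s \<subseteq> strip t" and "\<And>s. \<exists>t. f ` strip s \<subseteq> strip t"
  shows "maps_strips (\<lambda>\<alpha>. h \<circ> k \<alpha> \<circ> f)"
  unfolding maps_strips_def
proof
  fix s
  obtain t where "f ` strip s \<subseteq> strip t"
    using assms(3) by blast
  moreover obtain u where "\<forall>\<alpha>. k \<alpha> ` strip t \<subseteq> strip u"
    using assms(1) unfolding maps_strips_def by blast
  moreover obtain v where "h ` strip u \<subseteq> strip v"
    using assms(2) by blast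
  ultimately have "\<forall>\<alpha>. (h \<circ> k \<alpha> \<circ> f) ` strip s \<subseteq> strip v"
    by (auto simp: image_subset_iff)
  then show "\<exists>v. \<forall>\<alpha>. (h \<circ> k \<alpha> \<circ> f) ` strip s \<subseteq> strip v" ..
qed

lemma equicontinuous_on_strips_comp:
  assumes "equicontinuous_on_strips k" and "maps_strips k"
    and "\<And>s. uniformly_continuous_on (strip s) h"
    and "\<And>s. uniformly_continuous_on (strip s) f" and "\<And>s. \<exists>t. f ` strip s \<subseteq> strip t"
  shows "equicontinuous_on_strips (\<lambda>\<alpha>. h \<circ> k \<alpha> \<circ> f)"
  unfolding equicontinuous_on_strips_def
proof (intro allI impI)
  fix s e :: real assume "e > 0"
  obtain t where t: "f ` strip s \<subseteq> strip t"
    using assms(5) by blast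
  obtain u where u: "\<forall>\<alpha>. k \<alpha> ` strip t \<subseteq> strip u"
    using assms(2) unfolding maps_strips_def by blast
  obtain d1 where d1: "d1 > 0" "\<forall>x\<in>strip u. \<forall>y\<in>strip u. dist x y < d1 \<longrightarrow> dist (h x) (h y) < e"
    using assms(3)[of u] \<open>e > 0\<close> unfolding uniformly_continuous_on_def by (metis dist_commute)
  obtain d2 where d2: "d2 > 0"
    "\<forall>\<alpha>. \<forall>x\<in>strip t. \<forall>y\<in>strip t. dist x y < d2 \<longrightarrow> dist (k \<alpha> x) (k \<alpha> y) < d1"
    using assms(1) d1(1) unfolding equicontinuous_on_strips_def by blast
  obtain d3 where d3: "d3 > 0" "\<forall>x\<in>strip s. \<forall>y\<in>strip s. dist x y < d3 \<longrightarrow> dist (f x) (f y) < d2"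
    using assms(4)[of s] d2(1) unfolding uniformly_continuous_on_def by (metis dist_commute)
  show "\<exists>d>0. \<forall>\<alpha>. \<forall>x\<in>strip s. \<forall>y\<in>strip s. dist x y < d \<longrightarrow>
          dist ((h \<circ> k \<alpha> \<circ> f) x) ((h \<circ> k \<alpha> \<circ> f) y) < e"
    using d1 d2 d3 t u by (intro exI[of _ d3]) (auto simp: image_subset_iff)
qed

lemma close_on_strips_comp:
  assumes "close_on_strips F k k'" and "maps_strips k"
    and "\<And>s. uniformly_continuous_on (strip s) h" and "\<And>s. \<exists>t. f ` strip s \<subseteq> strip t"
  shows "close_on_strips F (\<lambda>\<alpha>. h \<circ> k \<alpha> \<circ> f) (\<lambda>\<alpha>. h \<circ> k' \<alpha> \<circ> f)"
  unfolding close_on_strips_def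
proof (intro allI impI)
  fix s e :: real assume "e > 0"
  obtain t where t: "f ` strip s \<subseteq> strip t"
    using assms(4) by blast
  obtain u where u: "\<forall>\<alpha>. k \<alpha> ` strip t \<subseteq> strip u"
    using assms(2) unfolding maps_strips_def by blast
  obtain d where d: "d > 0"
    "\<forall>x\<in>strip (u + 1). \<forall>y\<in>strip (u + 1). dist x y < d \<longrightarrow> dist (h x) (h y) < e"
    using assms(3)[of "u + 1"] \<open>e > 0\<close> unfolding uniformly_continuous_on_def by (metis dist_commute)
  have "min d 1 > 0"
    using d(1) by simp
  then have "\<forall>\<^sub>F \<alpha> in F. \<forall>w\<in>strip t. dist (k \<alpha> w) (k' \<alpha> w) < min d 1"
    using assms(1) unfolding close_on_strips_def by blast
  then show "\<forall>\<^sub>F \<alpha> in F. \<forall>z\<in>strip s. dist ((h \<circ> k \<alpha> \<circ> f) z) ((h \<circ> k' \<alpha> \<circ> f) z) < e"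
  proof eventually_elim
    case (elim \<alpha>)
    show ?case
    proof
      fix z assume "z \<in> strip s"
      then have "k \<alpha> (f z) \<in> strip u"
        using t u by auto
      moreover have close: "dist (k \<alpha> (f z)) (k' \<alpha> (f z)) < min d 1"
        using elim t \<open>z \<in> strip s\<close> by auto
      ultimately have "k \<alpha> (f z) \<in> strip (u + 1)" "k' \<alpha> (f z) \<in> strip (u + 1)"
        using strip_near[of "k \<alpha> (f z)" u "k' \<alpha> (f z)" 1] by (auto simp: strip_def)
      then show "dist ((h \<circ> k \<alpha> \<circ> f) z) ((h \<circ> k' \<alpha> \<circ> f) z) < e"
        using d(2) close by simp
    qed
  qed
qed

lemma maps_strips_funpow: "maps_strips f \<Longrightarrow> maps_strips (\<lambda>\<alpha>. f \<alpha> ^^ n)"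
proof (induction n)
  case 0
  then show ?case
    by (auto simp: maps_strips_def)
next
  case (Suc n)
  show ?case
    unfolding maps_strips_def
  proof
    fix s
    obtain t where "\<forall>\<alpha>. (f \<alpha> ^^ n) ` strip s \<subseteq> strip t"
      using Suc unfolding maps_strips_def by blast
    moreover obtain u where "\<forall>\<alpha>. f \<alpha> ` strip t \<subseteq> strip u"
      using Suc.prems unfolding maps_strips_def by blast
    ultimately have "\<forall>\<alpha>. (f \<alpha> ^^ Suc n) ` strip s \<subseteq> strip u"
      by (auto simp: image_subset_iff)
    then show "\<exists>u. \<forall>\<alpha>. (f \<alpha> ^^ Suc n) ` strip s \<subseteq> strip u" ..
  qed
qed

lemma close_on_strips_compose:
  assumes close: "close_on_strips F f g" and equicont: "equicontinuous_on_strips f"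
    and close': "close_on_strips F f' g'" and maps': "maps_strips f'"
  shows "close_on_strips F (\<lambda>\<alpha>. f \<alpha> \<circ> f' \<alpha>) (\<lambda>\<alpha>. g \<alpha> \<circ> g' \<alpha>)"
  unfolding close_on_strips_def
proof (intro allI impI)
  fix s e :: real assume "e > 0"
  obtain t where t: "\<forall>\<alpha>. f' \<alpha> ` strip s \<subseteq> strip t"
    using maps' unfolding maps_strips_def by blast
  obtain d where d: "d > 0" "\<forall>\<alpha>. \<forall>x\<in>strip (t + 1). \<forall>y\<in>strip (t + 1).
      dist x y < d \<longrightarrow> dist (f \<alpha> x) (f \<alpha> y) < e / 2"
    using equicont \<open>e > 0\<close> unfolding equicontinuous_on_strips_def by (meson half_gt_zero)
  have "min d 1 > 0"
    using d(1) by simp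
  then have "\<forall>\<^sub>F \<alpha> in F. \<forall>z\<in>strip s. dist (f' \<alpha> z) (g' \<alpha> z) < min d 1"
    using close' unfolding close_on_strips_def by blast
  moreover have "\<forall>\<^sub>F \<alpha> in F. \<forall>w\<in>strip (t + 1). dist (f \<alpha> w) (g \<alpha> w) < e / 2"
    using close \<open>e > 0\<close> unfolding close_on_strips_def by (meson half_gt_zero)
  ultimately show "\<forall>\<^sub>F \<alpha> in F. \<forall>z\<in>strip s. dist ((f \<alpha> \<circ> f' \<alpha>) z) ((g \<alpha> \<circ> g' \<alpha>) z) < e"
  proof eventually_elim
    case (elim \<alpha>)
    show ?case
    proof
      fix z assume "z \<in> strip s"
      define u v where "u = f' \<alpha> z" and "v = g' \<alpha> z"
      have "u \<in> strip t"
        using t \<open>z \<in> strip s\<close> unfolding u_def by blast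
      moreover have uv: "dist u v < min d 1"
        using elim(1) \<open>z \<in> strip s\<close> unfolding u_def v_def by blast
      ultimately have "u \<in> strip (t + 1)" "v \<in> strip (t + 1)"
        using strip_near[of u t v 1] by (auto simp: strip_def)
      have "dist (f \<alpha> u) (g \<alpha> v) \<le> dist (f \<alpha> u) (f \<alpha> v) + dist (f \<alpha> v) (g \<alpha> v)"
        by (rule dist_triangle)
      also have "\<dots> < e / 2 + e / 2"
        using d(2) elim(2) uv \<open>u \<in> strip (t + 1)\<close> \<open>v \<in> strip (t + 1)\<close>
        by (intro add_strict_mono) auto
      finally show "dist ((f \<alpha> \<circ> f' \<alpha>) z) ((g \<alpha> \<circ> g' \<alpha>) z) < e"
        by (simp add: u_def v_def)
    qed
  qed
qed

lemma close_on_strips_funpow: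
  assumes "close_on_strips F f g" and "maps_strips f" and "equicontinuous_on_strips f"
  shows "close_on_strips F (\<lambda>\<alpha>. f \<alpha> ^^ n) (\<lambda>\<alpha>. g \<alpha> ^^ n)"
proof (induction n)
  case 0
  then show ?case
    by (simp add: close_on_strips_def)
next
  case (Suc n)
  then have "close_on_strips F (\<lambda>\<alpha>. f \<alpha> \<circ> (f \<alpha> ^^ n)) (\<lambda>\<alpha>. g \<alpha> \<circ> (g \<alpha> ^^ n))"
    using assms by (intro close_on_strips_compose maps_strips_funpow)
  then show ?case
    by (simp only: funpow.simps(2))
qed

lemma sin_lattice_shift:
  fixes x :: complex
  shows "sin (2 * of_real pi * of_int q * (x + of_int m)) = sin (2 * of_real pi * of_int q * x)"
proof -
  have "2 * of_real pi * of_int q * (x + of_int m) = 2 * of_real pi * of_int q * x + of_int (q * m) * (2 * of_real pi)"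
    by (simp add: algebra_simps)
  then show ?thesis
    by (simp only: sin.plus_of_int)
qed

lemma inv_Phi:
  "inv (Phi q c) = (\<lambda>w. (fst w - of_real (1 / (2 * of_int q)),
     snd w - of_real c * sin (2 * of_real pi * of_int q * (fst w - of_real (1 / (2 * of_int q))))))"
  by (rule inv_equality) (simp_all add: Phi_def)

lemma dist_Rot_Phi_conj_Rot:
  "dist (Rot \<alpha> w) ((inv (Phi q c) \<circ> Rot \<alpha> \<circ> Phi q c) w) =
     cmod (of_real c * sin (2 * of_real pi * of_int q * (fst w + of_real \<alpha>))
           - of_real c * sin (2 * of_real pi * of_int q * fst w))"
proof -
  have "Rot \<alpha> w - (inv (Phi q c) \<circ> Rot \<alpha> \<circ> Phi q c) w =
     (0, of_real c * sin (2 * of_real pi * of_int q * (fst w + of_real \<alpha>))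
         - of_real c * sin (2 * of_real pi * of_int q * fst w))"
    by (simp add: inv_Phi Phi_def Rot_def)
  then show ?thesis
    by (simp add: dist_norm)
qed

lemma close_on_strips_Phi_conj_Rot:
  assumes "q \<noteq> 0"
  shows "close_on_strips (nhds (of_int p / of_int q)) Rot (\<lambda>\<alpha>. inv (Phi q c) \<circ> Rot \<alpha> \<circ> Phi q c)"
  unfolding close_on_strips_def
proof (intro allI impI)
  fix s e :: real assume "e > 0"
  define \<beta> :: real where "\<beta> = of_int p / of_int q"
  define S :: "c2 \<Rightarrow> complex" where "S z = of_real c * sin (2 * of_real pi * of_int q * fst z)" for z
  have "lattice_periodic S"
    by (simp add: lattice_periodic_def S_def sin_lattice_shift)
  moreover have "continuous_on UNIV S"
    unfolding S_def by (intro continuous_intros)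
  ultimately obtain d where d: "d > 0" "\<forall>x\<in>strip s. \<forall>y\<in>strip s. dist y x < d \<longrightarrow> dist (S y) (S x) < e"
    using lattice_periodic_uniformly_continuous_on_strip \<open>e > 0\<close>
    unfolding uniformly_continuous_on_def by metis
  have "\<forall>\<^sub>F \<alpha> in nhds \<beta>. dist \<alpha> \<beta> < d"
    using d(1) eventually_nhds_metric by blast
  then show "\<forall>\<^sub>F \<alpha> in nhds \<beta>. \<forall>z\<in>strip s. dist (Rot \<alpha> z) ((inv (Phi q c) \<circ> Rot \<alpha> \<circ> Phi q c) z) < e"
  proof eventually_elim
    case (elim \<alpha>)
    show ?case
    proof
      fix z assume "z \<in> strip s"
      define z' where "z' = (fst z + of_real (\<alpha> - \<beta>), snd z)"
      have "z' \<in> strip s"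
        using \<open>z \<in> strip s\<close> by (simp add: z'_def strip_def)
      moreover have "z' - z = (of_real (\<alpha> - \<beta>), 0)"
        by (simp add: z'_def prod_eq_iff)
      then have "dist z' z < d"
        using elim by (simp add: dist_norm dist_real_def norm_Pair1 flip: of_real_diff)
      ultimately have "dist (S z') (S z) < e"
        using d(2) \<open>z \<in> strip s\<close> by blast
      moreover have "2 * of_real pi * of_int q * (fst z + of_real \<alpha>) =
          2 * of_real pi * of_int q * fst z' + of_int p * (2 * of_real pi)"
        using assms by (simp add: z'_def \<beta>_def field_simps)
      then have "dist (Rot \<alpha> z) ((inv (Phi q c) \<circ> Rot \<alpha> \<circ> Phi q c) z) = dist (S z') (S z)"
        by (simp only: dist_Rot_Phi_conj_Rot) (simp add: S_def dist_norm sin.plus_of_int)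
      ultimately show "dist (Rot \<alpha> z) ((inv (Phi q c) \<circ> Rot \<alpha> \<circ> Phi q c) z) < e"
        by simp
    qed
  qed
qed

lemma close_on_strips_Max_dist_r:
  fixes f g :: "nat \<Rightarrow> real \<Rightarrow> c2 \<Rightarrow> c2"
  assumes close: "\<And>i. close_on_strips (nhds \<beta>) (f i) (g i)" and "\<epsilon> > 0"
  shows "\<exists>\<delta>>0. \<forall>\<alpha>. \<bar>\<alpha> - \<beta>\<bar> < \<delta> \<longrightarrow> Max ((\<lambda>i. dist_r r (f i \<alpha>) (g i \<alpha>)) ` {0..\<tau>}) < ereal \<epsilon>"
proof -
  have "\<forall>\<^sub>F \<alpha> in nhds \<beta>. \<forall>z\<in>strip r. dist (f i \<alpha> z) (g i \<alpha> z) < \<epsilon> / 2" for i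
    using close half_gt_zero[OF \<open>\<epsilon> > 0\<close>] unfolding close_on_strips_def by blast
  then have "\<forall>\<^sub>F \<alpha> in nhds \<beta>. \<forall>i\<in>{0..\<tau>}. \<forall>z\<in>strip r. dist (f i \<alpha> z) (g i \<alpha> z) < \<epsilon> / 2"
    by (intro eventually_ball_finite) auto
  then obtain \<delta> where "\<delta> > 0"
    and \<delta>: "\<And>\<alpha> i z. dist \<alpha> \<beta> < \<delta> \<Longrightarrow> i \<in> {0..\<tau>} \<Longrightarrow> z \<in> strip r \<Longrightarrow>
      dist (f i \<alpha> z) (g i \<alpha> z) < \<epsilon> / 2"
    unfolding eventually_nhds_metric by blast
  have "Max ((\<lambda>i. dist_r r (f i \<alpha>) (g i \<alpha>)) ` {0..\<tau>}) < ereal \<epsilon>" if "dist \<alpha> \<beta> < \<delta>" for \<alpha>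
  proof -
    have "dist_r r (f i \<alpha>) (g i \<alpha>) < ereal \<epsilon>" if "i \<in> {0..\<tau>}" for i
    proof -
      have "dist_r r (f i \<alpha>) (g i \<alpha>) \<le> ereal (\<epsilon> / 2)"
        using \<delta>[OF \<open>dist \<alpha> \<beta> < \<delta>\<close> that] by (intro dist_r_le less_imp_le)
      also have "\<dots> < ereal \<epsilon>"
        using \<open>\<epsilon> > 0\<close> by simp
      finally show ?thesis .
    qed
    then show ?thesis
      by (subst Max_less_iff) auto
  qed
  with \<open>\<delta> > 0\<close> show ?thesis
    unfolding dist_real_def by blast
qed

theorem corollary2p1:
  fixes F H :: "c2 \<Rightarrow> c2" and p q :: int and c r \<epsilon> :: real and \<tau> :: nat
  assumes F_entire: "entire2 F" and H_entire: "entire2 H"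
    and F_real: "\<And>z. real_pt z \<Longrightarrow> real_pt (F z)"
    and H_real: "\<And>z. real_pt z \<Longrightarrow> real_pt (H z)"
    and HF: "\<And>z. real_pt z \<Longrightarrow> H (F z) = z"
    and FH: "\<And>z. real_pt z \<Longrightarrow> F (H z) = z"
    and F_lift: "lift_id_periodic F" and H_lift: "lift_id_periodic H"
    and cop: "coprime p q" and q_pos: "q \<ge> 1"
    and pq_range: "0 \<le> real_of_int p / real_of_int q" "real_of_int p / real_of_int q \<le> 1"
    and c_nonneg: "c \<ge> 0"
    and r_nonneg: "r \<ge> 0" and eps_pos: "\<epsilon> > 0"
  shows "\<exists>\<delta>>0. \<forall>\<alpha>. \<bar>\<alpha> - real_of_int p / real_of_int q\<bar> < \<delta> \<longrightarrow>
           Max ((\<lambda>i. dist_r r ((H \<circ> Rot \<alpha> \<circ> F) ^^ i)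
                     ((H \<circ> inv (Phi q c) \<circ> Rot \<alpha> \<circ> Phi q c \<circ> F) ^^ i)) ` {0..\<tau>})
           < ereal \<epsilon>"
proof -
  define G where "G \<alpha> = H \<circ> Rot \<alpha> \<circ> F" for \<alpha>
  define G' where "G' \<alpha> = H \<circ> (inv (Phi q c) \<circ> Rot \<alpha> \<circ> Phi q c) \<circ> F" for \<alpha>
  have F: "continuous_on UNIV F" "lift_id_periodic F"
    and H: "continuous_on UNIV H" "lift_id_periodic H"
    using F_entire H_entire F_lift H_lift by (simp_all add: entire2_continuous)
  have "close_on_strips (nhds (real_of_int p / real_of_int q)) G G'"
    unfolding G_def G'_def
    using q_pos lift_uniformly_continuous_on_strip[OF H] lift_maps_strip[OF F]
    by (intro close_on_strips_comp close_on_strips_Phi_conj_Rot maps_strips_Rot) auto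
  moreover have "maps_strips G" "equicontinuous_on_strips G"
    unfolding G_def
    using lift_uniformly_continuous_on_strip[OF H] lift_uniformly_continuous_on_strip[OF F]
      lift_maps_strip[OF H] lift_maps_strip[OF F]
    by (intro maps_strips_comp equicontinuous_on_strips_comp maps_strips_Rot
        equicontinuous_on_strips_Rot; blast)+
  ultimately have "close_on_strips (nhds (real_of_int p / real_of_int q)) (\<lambda>\<alpha>. G \<alpha> ^^ i) (\<lambda>\<alpha>. G' \<alpha> ^^ i)"
    for i by (rule close_on_strips_funpow)
  from close_on_strips_Max_dist_r[OF this eps_pos] show ?thesis
    by (simp add: G_def G'_def comp_assoc)
qed

end
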